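(* Let $n>1$, $m\ge1$, let $P$ be a pivot path of $v\in Z_{n,m}$ and let $I=[p_1+1,p_2]$ be a $P$-interval. (1) Assume $p_2=m+1$ and $P$ shifts left in $I$. If $\sum_{i=j}^{m+1}v_i\geq0$ for every $j\in I$, then no step of $P$ is a left shift at $m$ applied to a vertex whose entry $m+1$ equals $0$. (2) Assume $p_1=-1$ and $P$ shifts right in $I$. If $\sum_{i=0}^{j}v_i\geq0$ for every $j\in I$, then no step of $P$ is a right shift at $0$ applied to a vertex whose entry $0$ equals $0$.
   Context: Elements of $\mathbb{Z}_n$ are identified with representatives in $\{0,\dots,n-1\}$ (so $v_0,v_{m+1}$ are such integers in sums). $Z_{n,m}$ has vertices $u=(u_0,\dots,u_{m+1})\in\mathbb{Z}_n\times\{-1,0,1\}^m\times\mathbb{Z}_n$ with $\sum u_i\equiv0\pmod n$. A step from $v$ to $u$ is a left shift at $i$ ($0\le i\le m$) if $u_j=v_j$ for $j\notin\{i,i+1\}$, $u_i=v_i+1$, $u_{i+1}=v_{i+1}-1$, and a right shift at $i$ if $u_i=v_i-1$, $u_{i+1}=v_{i+1}+1$ (arithmetic in coordinates $0,m+1$ in $\mathbb{Z}_n$); vertices are adjacent iff related by such a shift. For a path $P$ from $v$ to the all-zero vertex $0$: $0\le p\le m$ is an inner wall if no step is a shift at $p$; $-1$ is a wall if no step is a left shift at $0$; $m+1$ is a wall if no step is a right shift at $m$. A $p$-pivot path of $v$ is a shortest path from $v$ to $0$ among those having $p$ as a wall; a pivot path is a $p$-pivot path for some $p$. If $p_1<\dots<p_t$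 are the inner walls of $P$, $p_0=-1$, $p_{t+1}=m+1$, the $P$-intervals are $[p_k+1,p_{k+1}]$. For a pivot path, all steps that are shifts at $j$ with $[j,j+1]\subseteq I$ go in one direction; $P$ shifts left (right) in $I$ accordingly. *)

theory Defs
  imports Main
begin

text \<open>Vertices of Z_{n,m}: functions u :: nat => int, coordinates 0..m+1, zero outside.
  Coordinates 0 and m+1 are representatives in {0..n-1}, inner coordinates in {-1,0,1}.\<close>

definition zvert :: "nat \<Rightarrow> nat \<Rightarrow> (nat \<Rightarrow> int) \<Rightarrow> bool" where
  "zvert n m u \<longleftrightarrow>
     (\<forall>i. i > m + 1 \<longrightarrow> u i = 0) \<and>
     0 \<le> u 0 \<and> u 0 < int n \<and> 0 \<le> u (m+1) \<and> u (m+1) < int n \<and>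
     (\<forall>i\<in>{1..m}. u i \<in> {-1, 0, 1}) \<and>
     (\<Sum>i\<le>m+1. u i) mod int n = 0"

definition coord_norm :: "nat \<Rightarrow> nat \<Rightarrow> nat \<Rightarrow> int \<Rightarrow> int" where
  "coord_norm n m j x = (if j = 0 \<or> j = m + 1 then x mod int n else x)"

definition lshift :: "nat \<Rightarrow> nat \<Rightarrow> nat \<Rightarrow> (nat \<Rightarrow> int) \<Rightarrow> (nat \<Rightarrow> int) \<Rightarrow> bool" where
  "lshift n m i v u \<longleftrightarrow> i \<le> m \<and>
     (\<forall>j. j \<noteq> i \<and> j \<noteq> i + 1 \<longrightarrow> u j = v j) \<and>
     u i = coord_norm n m i (v i + 1) \<and>
     u (i+1) = coord_norm n m (i+1) (v (i+1) - 1)"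

definition rshift :: "nat \<Rightarrow> nat \<Rightarrow> nat \<Rightarrow> (nat \<Rightarrow> int) \<Rightarrow> (nat \<Rightarrow> int) \<Rightarrow> bool" where
  "rshift n m i v u \<longleftrightarrow> i \<le> m \<and>
     (\<forall>j. j \<noteq> i \<and> j \<noteq> i + 1 \<longrightarrow> u j = v j) \<and>
     u i = coord_norm n m i (v i - 1) \<and>
     u (i+1) = coord_norm n m (i+1) (v (i+1) + 1)"

definition zadj :: "nat \<Rightarrow> nat \<Rightarrow> (nat \<Rightarrow> int) \<Rightarrow> (nat \<Rightarrow> int) \<Rightarrow> bool" where
  "zadj n m v u \<longleftrightarrow> zvert n m v \<and> zvert n m u \<and> (\<exists>i. lshift n m i v u \<or> rshift n m i v u)"

definition zpath :: "nat \<Rightarrow> nat \<Rightarrow> (nat \<Rightarrow> int) list \<Rightarrow> bool" where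
  "zpath n m P \<longleftrightarrow> P \<noteq> [] \<and> (\<forall>x\<in>set P. zvert n m x) \<and>
     (\<forall>k. k + 1 < length P \<longrightarrow> zadj n m (P!k) (P!(k+1)))"

definition zpath_to0 :: "nat \<Rightarrow> nat \<Rightarrow> (nat \<Rightarrow> int) \<Rightarrow> (nat \<Rightarrow> int) list \<Rightarrow> bool" where
  "zpath_to0 n m v P \<longleftrightarrow> zpath n m P \<and> hd P = v \<and> last P = (\<lambda>_. 0)"

definition has_lshift_at :: "nat \<Rightarrow> nat \<Rightarrow> (nat \<Rightarrow> int) list \<Rightarrow> nat \<Rightarrow> bool" where
  "has_lshift_at n m P i \<longleftrightarrow> (\<exists>k. k + 1 < length P \<and> lshift n m i (P!k) (P!(k+1)))"

definition has_rshift_at :: "nat \<Rightarrow> nat \<Rightarrow> (nat \<Rightarrow> int) list \<Rightarrow> nat \<Rightarrow> bool" where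
  "has_rshift_at n m P i \<longleftrightarrow> (\<exists>k. k + 1 < length P \<and> rshift n m i (P!k) (P!(k+1)))"

definition inner_wall :: "nat \<Rightarrow> nat \<Rightarrow> (nat \<Rightarrow> int) list \<Rightarrow> int \<Rightarrow> bool" where
  "inner_wall n m P p \<longleftrightarrow> 0 \<le> p \<and> p \<le> int m \<and>
     \<not> has_lshift_at n m P (nat p) \<and> \<not> has_rshift_at n m P (nat p)"

definition is_wall :: "nat \<Rightarrow> nat \<Rightarrow> (nat \<Rightarrow> int) list \<Rightarrow> int \<Rightarrow> bool" where
  "is_wall n m P p \<longleftrightarrow> inner_wall n m P p \<or>
     (p = -1 \<and> \<not> has_lshift_at n m P 0) \<or>
     (p = int m + 1 \<and> \<not> has_rshift_at n m P m)"

text \<open>p-pivot path: shortest path from v to 0 among those having p as a wall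
  (length = number of steps = length of the vertex list minus one).\<close>
definition p_pivot_path :: "nat \<Rightarrow> nat \<Rightarrow> int \<Rightarrow> (nat \<Rightarrow> int) \<Rightarrow> (nat \<Rightarrow> int) list \<Rightarrow> bool" where
  "p_pivot_path n m p v P \<longleftrightarrow> zpath_to0 n m v P \<and> is_wall n m P p \<and>
     (\<forall>Q. zpath_to0 n m v Q \<and> is_wall n m Q p \<longrightarrow> length P \<le> length Q)"

definition pivot_path :: "nat \<Rightarrow> nat \<Rightarrow> (nat \<Rightarrow> int) \<Rightarrow> (nat \<Rightarrow> int) list \<Rightarrow> bool" where
  "pivot_path n m v P \<longleftrightarrow> (\<exists>p. -1 \<le> p \<and> p \<le> int m + 1 \<and> p_pivot_path n m p v P)"

definition P_interval :: "nat \<Rightarrow> nat \<Rightarrow> (nat \<Rightarrow> int) list \<Rightarrow> int \<Rightarrow> int \<Rightarrow> bool" where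
  "P_interval n m P a b \<longleftrightarrow> -1 \<le> a \<and> a < b \<and> b \<le> int m + 1 \<and>
     (a = -1 \<or> inner_wall n m P a) \<and> (b = int m + 1 \<or> inner_wall n m P b) \<and>
     (\<forall>q. a < q \<and> q < b \<longrightarrow> \<not> inner_wall n m P q)"

definition shifts_left_in :: "nat \<Rightarrow> nat \<Rightarrow> (nat \<Rightarrow> int) list \<Rightarrow> int \<Rightarrow> int \<Rightarrow> bool" where
  "shifts_left_in n m P lo hi \<longleftrightarrow> (\<forall>k j. k + 1 < length P \<and> lo \<le> int j \<and> int j + 1 \<le> hi \<longrightarrow>
      \<not> rshift n m j (P!k) (P!(k+1)))"

definition shifts_right_in :: "nat \<Rightarrow> nat \<Rightarrow> (nat \<Rightarrow> int) list \<Rightarrow> int \<Rightarrow> int \<Rightarrow> bool" where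
  "shifts_right_in n m P lo hi \<longleftrightarrow> (\<forall>k j. k + 1 < length P \<and> lo \<le> int j \<and> int j + 1 \<le> hi \<longrightarrow>
      \<not> lshift n m j (P!k) (P!(k+1)))"

end

theory Submission
  imports Defs
begin

(* For j in a P-interval I, the suffix sum S_j(u) = u_j + ... + u_(m+1) is changed by a step
   of P only if the step is a left shift at j - 1, which lowers it by 1, or a left shift at m
   applied to a vertex with entry m + 1 = 0 (a wrapping shift), which raises it by n.  Summing
   along P from v to 0 gives c_(j-1) = S_j(v) + n W, where c_i counts the left shifts at i and
   W the wrapping shifts.  If p1 is an inner wall then c_p1 = 0, so S_(p1+1)(v) >= 0 forces
   W = 0.  If p1 = -1, P consists of left shifts only; if W > 0 then every c_i >= n, so m + 1
   is the only possible wall of P, and the counts c_i - n are realised by a path of left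
   shifts from v to 0 which is n (m + 1) steps shorter and again has the wall m + 1,
   contradicting minimality.  Part (2) is part (1) for the mirror image u_i |-> u_(m+1-i),
   which exchanges left and right shifts. *)

section \<open>Counting steps along a list\<close>

lemma successively_iff_nth:
  "successively R xs \<longleftrightarrow> (\<forall>k. k + 1 < length xs \<longrightarrow> R (xs ! k) (xs ! (k + 1)))"
proof (induction xs rule: induct_list012)
  case (3 x y xs)
  have "(\<forall>k. k + 1 < length (x # y # xs) \<longrightarrow> R ((x # y # xs) ! k) ((x # y # xs) ! (k + 1)))
      \<longleftrightarrow> R x y \<and> (\<forall>k. k + 1 < length (y # xs) \<longrightarrow> R ((y # xs) ! k) ((y # xs) ! (k + 1)))"
    by (auto simp: less_Suc_eq_0_disj)
  with 3 show ?case by simp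
qed auto

fun count_steps :: "('a \<Rightarrow> 'a \<Rightarrow> bool) \<Rightarrow> 'a list \<Rightarrow> nat" where
  "count_steps R (x # y # xs) = of_bool (R x y) + count_steps R (y # xs)"
| "count_steps R _ = 0"

lemma count_steps_eq_0_iff: "count_steps R xs = 0 \<longleftrightarrow> successively (\<lambda>x y. \<not> R x y) xs"
  by (induction R xs rule: count_steps.induct) auto

lemma count_steps_telescope:
  fixes f :: "'a \<Rightarrow> int"
  assumes "successively (\<lambda>x y. f y = f x - of_bool (R x y) + c * of_bool (S x y)) xs" "xs \<noteq> []"
  shows "f (last xs) = f (hd xs) - int (count_steps R xs) + c * int (count_steps S xs)"
  using assms by (induction R xs rule: count_steps.induct) (auto simp: algebra_simps)

section \<open>Single shifts\<close>

definition wrapping_lshift :: "nat \<Rightarrow> nat \<Rightarrow> (nat \<Rightarrow> int) \<Rightarrow> (nat \<Rightarrow> int) \<Rightarrow> bool" where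
  "wrapping_lshift n m x y \<longleftrightarrow> lshift n m m x y \<and> x (m + 1) = 0"

lemma lshift_unique:
  assumes "lshift n m i x y" "lshift n m i' x y"
  shows "i = i'"
proof -
  have False if a: "lshift n m a x y" and b: "lshift n m b x y" and "a < b" for a b
  proof -
    have "1 \<le> b" "b \<le> m" using that by (auto simp: lshift_def)
    then have "y b = x b + 1" using b by (auto simp: lshift_def coord_norm_def)
    moreover have "y b = x b - 1 \<or> y b = x b"
      using a \<open>a < b\<close> \<open>b \<le> m\<close> by (cases "b = a + 1") (auto simp: lshift_def coord_norm_def)
    ultimately show False by auto
  qed
  then show ?thesis using assms by (cases i i' rule: linorder_cases) blast+
qed

lemma lshift_lower_coord: "lshift n m i x y \<Longrightarrow> 1 \<le> i \<Longrightarrow> y i = x i + 1"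
  by (simp add: lshift_def coord_norm_def)

lemma mod_pred_of_range:
  fixes z b :: int
  assumes "0 \<le> z" "z < b"
  shows "(z - 1) mod b = z - 1 + b * of_bool (z = 0)"
  using assms by (cases "z = 0") (simp_all add: zmod_minus1)

lemma lshift_upper_coord:
  assumes shift: "lshift n m i x y" and "zvert n m x"
  shows "y (i + 1) = x (i + 1) - 1 + int n * of_bool (wrapping_lshift n m x y)"
proof (cases "i = m")
  case True
  have "0 \<le> x (m + 1)" "x (m + 1) < int n" using \<open>zvert n m x\<close> by (auto simp: zvert_def)
  moreover have "y (m + 1) = (x (m + 1) - 1) mod int n" using shift True by (simp add: lshift_def coord_norm_def)
  ultimately show ?thesis using shift True mod_pred_of_range by (simp add: wrapping_lshift_def)
next
  case False
  then have "\<not> wrapping_lshift n m x y" using lshift_unique[OF shift] by (auto simp: wrapping_lshift_def)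
  moreover have "y (i + 1) = x (i + 1) - 1" using shift False by (simp add: lshift_def coord_norm_def)
  ultimately show ?thesis by simp
qed

lemma mod_succ_of_range_neq:
  fixes z b :: int
  assumes "0 \<le> z" "z < b" "1 < b"
  shows "(z + 1) mod b \<noteq> z"
  using assms by (cases "z + 1 = b") simp_all

lemma lshift_not_rshift_last:
  assumes shift: "lshift n m i x y" and "zvert n m x" "1 < n" "1 \<le> m"
  shows "\<not> rshift n m m x y"
proof
  assume r: "rshift n m m x y"
  have "0 \<le> x (m + 1)" "x (m + 1) < int n" using \<open>zvert n m x\<close> by (auto simp: zvert_def)
  moreover have "y (m + 1) = (x (m + 1) + 1) mod int n" using r by (simp add: rshift_def coord_norm_def)
  ultimately have "y (m + 1) \<noteq> x (m + 1)" using mod_succ_of_range_neq \<open>1 < n\<close> by simp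
  moreover have "i \<le> m" "y (m + 1) = x (m + 1) \<or> m + 1 = i + 1"
    using shift by (auto simp: lshift_def)
  ultimately have "i = m" by simp
  then have "y m = x m + 1" using lshift_lower_coord[OF shift] \<open>1 \<le> m\<close> by simp
  moreover have "y m = x m - 1" using r \<open>1 \<le> m\<close> by (simp add: rshift_def coord_norm_def)
  ultimately show False by simp
qed

lemma has_lshift_at_iff_count_steps: "has_lshift_at n m P i \<longleftrightarrow> count_steps (lshift n m i) P \<noteq> 0"
  by (simp add: has_lshift_at_def count_steps_eq_0_iff successively_iff_nth)

lemma zpath_iff_successively:
  "zpath n m P \<longleftrightarrow> P \<noteq> [] \<and> (\<forall>x\<in>set P. zvert n m x) \<and> successively (zadj n m) P"
  by (simp add: zpath_def successively_iff_nth)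

lemma zpath_to0_zvert: "zpath_to0 n m v P \<Longrightarrow> zvert n m v"
  by (auto simp: zpath_to0_def zpath_def)

lemma pivot_path_zpath_to0: "pivot_path n m v P \<Longrightarrow> zpath_to0 n m v P"
  by (auto simp: pivot_path_def p_pivot_path_def)

section \<open>Suffix sums along a path\<close>

lemma sum_eq_add_diff_on:
  fixes x y :: "'a \<Rightarrow> 'b::ab_group_add"
  assumes "finite A" "D \<subseteq> A" "\<forall>t\<in>A - D. y t = x t"
  shows "sum y A = sum x A + (\<Sum>t\<in>D. y t - x t)"
proof -
  have "sum y A - sum x A = (\<Sum>t\<in>A. y t - x t)" by (simp add: sum_subtractf)
  also have "\<dots> = (\<Sum>t\<in>D. y t - x t)" by (rule sum.mono_neutral_right) (use assms in auto)
  finally show ?thesis by (simp add: algebra_simps)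
qed

lemma suffix_sum_lshift:
  assumes shift: "lshift n m i x y" and "zvert n m x" "1 \<le> j" "j \<le> m + 1"
  shows "(\<Sum>t=j..m+1. y t) = (\<Sum>t=j..m+1. x t) - of_bool (lshift n m (j - 1) x y)
           + int n * of_bool (wrapping_lshift n m x y)"
proof -
  have "i \<le> m" and same: "\<And>t. t \<noteq> i \<Longrightarrow> t \<noteq> i + 1 \<Longrightarrow> y t = x t"
    using shift by (auto simp: lshift_def)
  have at_j: "lshift n m (j - 1) x y \<longleftrightarrow> i + 1 = j"
  proof
    assume "lshift n m (j - 1) x y"
    then have "i = j - 1" by (rule lshift_unique[OF shift])
    then show "i + 1 = j" using \<open>1 \<le> j\<close> by simp
  qed (use shift in auto)
  have wrap: "wrapping_lshift n m x y \<Longrightarrow> i = m"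
    unfolding wrapping_lshift_def using lshift_unique[OF shift] by blast
  have upper: "y (i + 1) = x (i + 1) - 1 + int n * of_bool (wrapping_lshift n m x y)"
    using lshift_upper_coord[OF shift \<open>zvert n m x\<close>] .
  consider "i + 1 < j" | "i + 1 = j" | "j \<le> i" by linarith
  then show ?thesis
  proof cases
    case 1
    then have "\<not> wrapping_lshift n m x y" using wrap \<open>j \<le> m + 1\<close> by fastforce
    moreover have "(\<Sum>t=j..m+1. y t) = (\<Sum>t=j..m+1. x t)" using 1 same by (intro sum.cong) auto
    ultimately show ?thesis using 1 at_j by simp
  next
    case 2
    have "(\<Sum>t=j..m+1. y t) = (\<Sum>t=j..m+1. x t) + (\<Sum>t\<in>{j}. y t - x t)"
      by (rule sum_eq_add_diff_on) (use 2 same \<open>i \<le> m\<close> in auto)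
    then show ?thesis using 2 at_j upper by simp
  next
    case 3
    have "(\<Sum>t=j..m+1. y t) = (\<Sum>t=j..m+1. x t) + (\<Sum>t\<in>{i, i + 1}. y t - x t)"
      by (rule sum_eq_add_diff_on) (use 3 same \<open>i \<le> m\<close> in auto)
    moreover have "y i = x i + 1" using lshift_lower_coord[OF shift] 3 \<open>1 \<le> j\<close> by simp
    ultimately show ?thesis using 3 at_j upper by simp
  qed
qed

lemma suffix_sum_along_path:
  assumes "zpath n m P" "1 \<le> j" "j \<le> m + 1"
    and no_rshift: "\<forall>k i. k + 1 < length P \<longrightarrow> rshift n m i (P ! k) (P ! (k + 1)) \<longrightarrow> i + 1 < j"
  shows "(\<Sum>t=j..m+1. last P t) = (\<Sum>t=j..m+1. hd P t) - int (count_steps (lshift n m (j - 1)) P)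
           + int n * int (count_steps (wrapping_lshift n m) P)"
proof -
  let ?S = "\<lambda>u. \<Sum>t=j..m+1. u t"
  have step: "?S y = ?S x - of_bool (lshift n m (j - 1) x y) + int n * of_bool (wrapping_lshift n m x y)"
    if adj: "zadj n m x y" and below: "\<forall>i. rshift n m i x y \<longrightarrow> i + 1 < j" for x y
  proof (cases "\<exists>i. lshift n m i x y")
    case True
    then show ?thesis using suffix_sum_lshift adj assms(2,3) by (auto simp: zadj_def)
  next
    case False
    then obtain i where "rshift n m i x y" "i + 1 < j" using adj below by (auto simp: zadj_def)
    then have "?S y = ?S x" by (intro sum.cong) (auto simp: rshift_def)
    then show ?thesis using False by (auto simp: wrapping_lshift_def)
  qed
  have "successively (\<lambda>x y. ?S y = ?S x - of_bool (lshift n m (j - 1) x y)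
          + int n * of_bool (wrapping_lshift n m x y)) P"
    unfolding successively_iff_nth
  proof (intro allI impI)
    fix k assume "k + 1 < length P"
    then show "?S (P ! (k + 1)) = ?S (P ! k) - of_bool (lshift n m (j - 1) (P ! k) (P ! (k + 1)))
                 + int n * of_bool (wrapping_lshift n m (P ! k) (P ! (k + 1)))"
      using assms(1) no_rshift by (intro step) (auto simp: zpath_def)
  qed
  moreover have "P \<noteq> []" using assms(1) by (simp add: zpath_def)
  ultimately show ?thesis
    using count_steps_telescope[of ?S "lshift n m (j - 1)" "int n" "wrapping_lshift n m" P] by blast
qed

lemma inner_wall_no_wrapping:
  assumes P: "zpath_to0 n m v P" and wall: "inner_wall n m P (int q)"
    and right: "\<forall>k i. k + 1 < length P \<longrightarrow> rshift n m i (P ! k) (P ! (k + 1)) \<longrightarrow> i \<le> q"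
    and "0 \<le> (\<Sum>t=q+1..m+1. v t)"
  shows "count_steps (wrapping_lshift n m) P = 0"
proof -
  have "q \<le> m" and no_lshift: "\<not> has_lshift_at n m P q" and "\<not> has_rshift_at n m P q"
    using wall by (auto simp: inner_wall_def)
  then have "\<forall>k i. k + 1 < length P \<longrightarrow> rshift n m i (P ! k) (P ! (k + 1)) \<longrightarrow> i + 1 < q + 1"
    using right unfolding has_rshift_at_def by (metis add_less_mono1 le_neq_implies_less)
  from suffix_sum_along_path[of n m P "q + 1", OF _ _ _ this] P \<open>q \<le> m\<close>
  have "int n * int (count_steps (wrapping_lshift n m) P) = - (\<Sum>t=q+1..m+1. v t)"
    using no_lshift by (simp add: zpath_to0_def has_lshift_at_iff_count_steps)
  with \<open>0 \<le> (\<Sum>t=q+1..m+1. v t)\<close> have "int n * int (count_steps (wrapping_lshift n m) P) \<le> 0"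
    by linarith
  moreover have "n > 0" using zpath_to0_zvert[OF P] by (auto simp: zvert_def)
  ultimately show ?thesis by (simp add: mult_le_0_iff)
qed

section \<open>Paths of left shifts with prescribed counts\<close>

lemma length_eq_count_lshifts:
  assumes "successively (\<lambda>x y. \<exists>i. lshift n m i x y) P" "P \<noteq> []"
  shows "length P = (\<Sum>i\<le>m. count_steps (lshift n m i) P) + 1"
  using assms
proof (induction P rule: induct_list012)
  case (3 x y xs)
  then obtain i where i: "lshift n m i x y" by auto
  then have "lshift n m i' x y \<longleftrightarrow> i' = i" for i' using lshift_unique by blast
  then have "(\<Sum>i'\<le>m. of_bool (lshift n m i' x y)) = (\<Sum>i'\<le>m. of_bool (i' = i) :: nat)" by simp
  also have "\<dots> = 1" using i by (simp add: lshift_def)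
  finally show ?case using 3 by (simp add: sum.distrib)
qed auto

(* a i is the number of left shifts at i on a path of left shifts from u to 0: an inner entry
   u i is raised by the shifts at i and lowered by those at i - 1, and the outer entries change
   modulo n. *)
definition left_shift_counts :: "nat \<Rightarrow> nat \<Rightarrow> (nat \<Rightarrow> int) \<Rightarrow> (nat \<Rightarrow> int) \<Rightarrow> bool" where
  "left_shift_counts n m u a \<longleftrightarrow> (\<forall>i\<le>m. 0 \<le> a i) \<and> (\<forall>i\<in>{1..m}. a (i - 1) = a i + u i) \<and>
     (a 0 + u 0) mod int n = 0 \<and> (a m - u (m + 1)) mod int n = 0"

definition lshift_at :: "nat \<Rightarrow> nat \<Rightarrow> nat \<Rightarrow> (nat \<Rightarrow> int) \<Rightarrow> (nat \<Rightarrow> int)" where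
  "lshift_at n m i u =
     u(i := coord_norm n m i (u i + 1), i + 1 := coord_norm n m (i + 1) (u (i + 1) - 1))"

lemma lshift_lshift_at: "i \<le> m \<Longrightarrow> lshift n m i u (lshift_at n m i u)"
  by (simp add: lshift_def lshift_at_def)

lemma coord_norm_eq_add_mult: "\<exists>k. coord_norm n m j x = x + int n * k"
proof (cases "j = 0 \<or> j = m + 1")
  case True
  then have "coord_norm n m j x = x + int n * (- (x div int n))"
    by (simp add: coord_norm_def minus_div_mult_eq_mod[symmetric] algebra_simps)
  then show ?thesis by blast
qed (auto simp: coord_norm_def)

lemma zvert_lshift_at:
  assumes u: "zvert n m u" and "i \<le> m"
    and lower: "1 \<le> i \<Longrightarrow> u i \<noteq> 1" and upper: "i + 1 \<le> m \<Longrightarrow> u (i + 1) \<noteq> -1"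
  shows "zvert n m (lshift_at n m i u)"
proof -
  let ?u' = "lshift_at n m i u"
  have "n > 0" using u by (auto simp: zvert_def)
  have outer: "\<forall>t. t > m + 1 \<longrightarrow> ?u' t = 0"
    "0 \<le> ?u' 0 \<and> ?u' 0 < int n \<and> 0 \<le> ?u' (m + 1) \<and> ?u' (m + 1) < int n"
    using u \<open>i \<le> m\<close> \<open>n > 0\<close> by (auto simp: lshift_at_def zvert_def coord_norm_def)
  have inner: "\<forall>t\<in>{1..m}. ?u' t \<in> {-1, 0, 1}"
  proof
    fix t assume t: "t \<in> {1..m}"
    then have "u t \<in> {-1, 0, 1}" using u by (auto simp: zvert_def)
    then show "?u' t \<in> {-1, 0, 1}" using t lower upper by (auto simp: lshift_at_def coord_norm_def)
  qed
  obtain k1 where k1: "coord_norm n m i (u i + 1) = u i + 1 + int n * k1"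
    using coord_norm_eq_add_mult by blast
  obtain k2 where k2: "coord_norm n m (i + 1) (u (i + 1) - 1) = u (i + 1) - 1 + int n * k2"
    using coord_norm_eq_add_mult by blast
  have "(\<Sum>t\<le>m+1. ?u' t) = (\<Sum>t\<le>m+1. u t) + (\<Sum>t\<in>{i, i + 1}. ?u' t - u t)"
    by (rule sum_eq_add_diff_on) (use \<open>i \<le> m\<close> in \<open>auto simp: lshift_at_def\<close>)
  also have "\<dots> = (\<Sum>t\<le>m+1. u t) + int n * (k1 + k2)"
    using k1 k2 by (simp add: lshift_at_def algebra_simps)
  finally have "(\<Sum>t\<le>m+1. ?u' t) mod int n = 0" using u by (simp add: zvert_def)
  with outer inner show ?thesis unfolding zvert_def by blast
qed

lemma left_shift_counts_lshift_at_max: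
  assumes counts: "left_shift_counts n m u a" and u: "zvert n m u" and "i \<le> m"
    and max: "\<forall>t\<le>m. a t \<le> a i" and "0 < a i"
  shows "zvert n m (lshift_at n m i u) \<and> left_shift_counts n m (lshift_at n m i u) (a(i := a i - 1))"
proof
  let ?u' = "lshift_at n m i u" and ?a' = "a(i := a i - 1)"
  have rel: "a (t - 1) = a t + u t" if "t \<in> {1..m}" for t
    using counts that by (simp add: left_shift_counts_def)
  have "a (i - 1) \<le> a i" using max \<open>i \<le> m\<close> by simp
  then have "u i \<noteq> 1" if "1 \<le> i" using rel[of i] \<open>i \<le> m\<close> that by auto
  moreover have "u (i + 1) \<noteq> -1" if "i + 1 \<le> m" using rel[of "i + 1"] max[rule_format, of "i + 1"] that by auto
  ultimately show "zvert n m ?u'" using zvert_lshift_at[OF u \<open>i \<le> m\<close>] by blast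
  have u'_inner: "?u' t = u t + of_bool (t = i) - of_bool (t = i + 1)" if "t \<in> {1..m}" for t
    using that by (auto simp: lshift_at_def coord_norm_def)
  have "?a' (t - 1) = ?a' t + ?u' t" if "t \<in> {1..m}" for t
    using rel[OF that] u'_inner[OF that] that by auto
  moreover have "(?a' 0 + ?u' 0) mod int n = 0"
  proof (cases "i = 0")
    case True
    then have "?a' 0 + ?u' 0 = a 0 - 1 + (u 0 + 1) mod int n" by (simp add: lshift_at_def coord_norm_def)
    then show ?thesis using counts by (simp add: left_shift_counts_def mod_add_right_eq)
  qed (use counts in \<open>simp add: left_shift_counts_def lshift_at_def\<close>)
  moreover have "(?a' m - ?u' (m + 1)) mod int n = 0"
  proof (cases "i = m")
    case True
    then have "?a' m - ?u' (m + 1) = a m - 1 - (u (m + 1) - 1) mod int n"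
      by (simp add: lshift_at_def coord_norm_def)
    then show ?thesis using counts by (simp add: left_shift_counts_def mod_diff_right_eq)
  qed (use counts \<open>i \<le> m\<close> in \<open>simp add: left_shift_counts_def lshift_at_def\<close>)
  moreover have "\<forall>t\<le>m. 0 \<le> ?a' t" using counts \<open>0 < a i\<close> by (simp add: left_shift_counts_def)
  ultimately show "left_shift_counts n m ?u' ?a'" unfolding left_shift_counts_def by blast
qed

lemma left_shift_counts_zero:
  assumes u: "zvert n m u" and counts: "left_shift_counts n m u a" and "(\<Sum>i\<le>m. a i) = 0"
  shows "u = (\<lambda>_. 0)"
proof
  fix t
  have a: "a i = 0" if "i \<le> m" for i
    using counts assms(3) sum_nonneg_eq_0_iff[of "{..m}" a] that by (auto simp: left_shift_counts_def)
  consider "t = 0" | "t \<in> {1..m}" | "t = m + 1" | "t > m + 1" by fastforce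
  then show "u t = 0"
  proof cases
    case 2
    then have "a (t - 1) = a t + u t" using counts by (simp add: left_shift_counts_def)
    moreover have "a (t - 1) = 0" using 2 by (intro a) auto
    ultimately show ?thesis using a[of t] 2 by simp
  next
    case 3
    have "int n dvd u (m + 1)" using counts a[of m] by (auto simp: left_shift_counts_def mod_eq_0_iff_dvd)
    moreover have "0 \<le> u (m + 1)" "u (m + 1) < int n" using u by (auto simp: zvert_def)
    ultimately show ?thesis using 3 zdvd_not_zless[of "u (m + 1)" "int n"] by fastforce
  qed (use u counts a in \<open>auto simp: zvert_def left_shift_counts_def\<close>)
qed

lemma path_from_left_shift_counts:
  assumes "zvert n m u" "left_shift_counts n m u a"
  shows "\<exists>Q. zpath_to0 n m u Q \<and> int (length Q) = (\<Sum>i\<le>m. a i) + 1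
            \<and> successively (\<lambda>x y. \<exists>i. lshift n m i x y) Q"
proof -
  have "0 \<le> (\<Sum>i\<le>m. a i)" using assms(2) by (intro sum_nonneg) (simp add: left_shift_counts_def)
  then obtain N where "(\<Sum>i\<le>m. a i) = int N" using nonneg_int_cases by blast
  with assms show ?thesis
  proof (induction N arbitrary: u a)
    case 0
    then have "u = (\<lambda>_. 0)" using left_shift_counts_zero by simp
    with 0 show ?case by (intro exI[of _ "[u]"]) (simp add: zpath_to0_def zpath_def)
  next
    case (Suc N)
    have "Max (a ` {..m}) \<in> a ` {..m}" by (intro Max_in) auto
    then obtain i where "i \<le> m" "a i = Max (a ` {..m})" by (metis atMost_iff imageE)
    then have max: "\<forall>t\<le>m. a t \<le> a i" by simp
    have "0 < a i"
    proof (rule ccontr)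
      assume "\<not> 0 < a i"
      then have "\<forall>t\<le>m. a t = 0" using max Suc.prems(2) by (force simp: left_shift_counts_def)
      then show False using Suc.prems(3) by simp
    qed
    let ?u' = "lshift_at n m i u" and ?a' = "a(i := a i - 1)"
    have u': "zvert n m ?u'" and counts': "left_shift_counts n m ?u' ?a'"
      using left_shift_counts_lshift_at_max[OF Suc.prems(2,1) \<open>i \<le> m\<close> max \<open>0 < a i\<close>] by auto
    have "(\<Sum>t\<le>m. ?a' t) = (\<Sum>t\<le>m. a t) + (\<Sum>t\<in>{i}. ?a' t - a t)"
      by (rule sum_eq_add_diff_on) (use \<open>i \<le> m\<close> in auto)
    then have "(\<Sum>t\<le>m. ?a' t) = int N" using Suc.prems(3) by simp
    then obtain Q where Q: "zpath_to0 n m ?u' Q" "int (length Q) = int N + 1"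
      and left: "successively (\<lambda>x y. \<exists>i. lshift n m i x y) Q"
      using Suc.IH[OF u' counts'] by auto
    have step: "lshift n m i u ?u'" using lshift_lshift_at[OF \<open>i \<le> m\<close>] .
    have "Q \<noteq> []" "hd Q = ?u'" using Q(1) by (auto simp: zpath_to0_def zpath_def)
    then have "zpath_to0 n m u (u # Q) \<and> successively (\<lambda>x y. \<exists>i. lshift n m i x y) (u # Q)"
      using Q(1) left step Suc.prems(1) u'
      by (auto simp: zpath_to0_def zpath_iff_successively successively_Cons zadj_def)
    then show ?case using Q(2) Suc.prems(3) by (intro exI[of _ "u # Q"]) simp
  qed
qed

lemma left_shift_counts_suffix_sums:
  assumes v: "zvert n m v" and nonneg: "\<forall>i\<le>m. 0 \<le> (\<Sum>t=i+1..m+1. v t) + int n * w"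
  shows "left_shift_counts n m v (\<lambda>i. (\<Sum>t=i+1..m+1. v t) + int n * w)"
  unfolding left_shift_counts_def
proof (intro conjI ballI)
  have split: "(\<Sum>t=i..m+1. v t) = v i + (\<Sum>t=i+1..m+1. v t)" if "i \<le> m + 1" for i
    using sum.atLeast_Suc_atMost[OF that, of v] by simp
  show "\<forall>i\<le>m. 0 \<le> (\<Sum>t=i+1..m+1. v t) + int n * w" using nonneg .
  show "(\<Sum>t=i-1+1..m+1. v t) + int n * w = (\<Sum>t=i+1..m+1. v t) + int n * w + v i"
    if "i \<in> {1..m}" for i using split[of i] that by simp
  have "(\<Sum>t=0+1..m+1. v t) + int n * w + v 0 = (\<Sum>t\<le>m+1. v t) + int n * w"
    using split[of 0] by (simp add: atMost_atLeast0)
  also have "\<dots> mod int n = (\<Sum>t\<le>m+1. v t) mod int n" by simp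
  finally show "((\<Sum>t=0+1..m+1. v t) + int n * w + v 0) mod int n = 0" using v by (simp add: zvert_def)
  show "((\<Sum>t=m+1..m+1. v t) + int n * w - v (m + 1)) mod int n = 0" by simp
qed

lemma left_path_lshift_count:
  assumes P: "zpath_to0 n m v P" and "i \<le> m"
    and left: "\<forall>k i. k + 1 < length P \<longrightarrow> \<not> rshift n m i (P ! k) (P ! (k + 1))"
  shows "int (count_steps (lshift n m i) P)
           = (\<Sum>t=i+1..m+1. v t) + int n * int (count_steps (wrapping_lshift n m) P)"
  using suffix_sum_along_path[of n m P "i + 1"] assms by (simp add: zpath_to0_def)

lemma left_path_shortening:
  assumes P: "zpath_to0 n m v P"
    and left: "\<forall>k i. k + 1 < length P \<longrightarrow> \<not> rshift n m i (P ! k) (P ! (k + 1))"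
    and wraps: "count_steps (wrapping_lshift n m) P \<noteq> 0"
    and sums: "\<forall>j\<in>{1..m+1}. 0 \<le> (\<Sum>t=j..m+1. v t)"
  shows "\<exists>Q. zpath_to0 n m v Q \<and> successively (\<lambda>x y. \<exists>i. lshift n m i x y) Q
            \<and> int (length P) = int (length Q) + int n * (int m + 1)"
proof -
  define W where "W = int (count_steps (wrapping_lshift n m) P)"
  have "1 \<le> W" using wraps by (simp add: W_def)
  have v: "zvert n m v" using zpath_to0_zvert[OF P] .
  have "left_shift_counts n m v (\<lambda>i. (\<Sum>t=i+1..m+1. v t) + int n * (W - 1))"
    using sums \<open>1 \<le> W\<close> by (intro left_shift_counts_suffix_sums[OF v]) auto
  then obtain Q where Q: "zpath_to0 n m v Q" "successively (\<lambda>x y. \<exists>i. lshift n m i x y) Q"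
    and length_Q: "int (length Q) = (\<Sum>i\<le>m. (\<Sum>t=i+1..m+1. v t) + int n * (W - 1)) + 1"
    using path_from_left_shift_counts[OF v] by blast
  have "successively (\<lambda>x y. \<exists>i. lshift n m i x y) P"
    using P left by (auto simp: zpath_to0_def zpath_def zadj_def successively_iff_nth)
  then have "int (length P) = (\<Sum>i\<le>m. int (count_steps (lshift n m i) P)) + 1"
    using length_eq_count_lshifts P by (simp add: zpath_to0_def zpath_def)
  also have "(\<Sum>i\<le>m. int (count_steps (lshift n m i) P))
               = (\<Sum>i\<le>m. ((\<Sum>t=i+1..m+1. v t) + int n * (W - 1)) + int n)"
    using left_path_lshift_count[OF P _ left] by (intro sum.cong) (simp_all add: W_def algebra_simps)
  also have "\<dots> + 1 = int (length Q) + int n * (int m + 1)"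
    using length_Q by (simp add: sum.distrib)
  finally show ?thesis using Q by blast
qed

lemma left_pivot_path_no_wrapping:
  assumes "1 < n" "1 \<le> m" and pivot: "pivot_path n m v P"
    and left: "\<forall>k i. k + 1 < length P \<longrightarrow> \<not> rshift n m i (P ! k) (P ! (k + 1))"
    and sums: "\<forall>j\<in>{1..m+1}. 0 \<le> (\<Sum>t=j..m+1. v t)"
  shows "count_steps (wrapping_lshift n m) P = 0"
proof (rule ccontr)
  assume wraps: "count_steps (wrapping_lshift n m) P \<noteq> 0"
  obtain p where "p_pivot_path n m p v P" "-1 \<le> p" "p \<le> int m + 1"
    using pivot by (auto simp: pivot_path_def)
  then have P: "zpath_to0 n m v P" and wall: "is_wall n m P p"
    and shortest: "\<And>Q. zpath_to0 n m v Q \<Longrightarrow> is_wall n m Q p \<Longrightarrow> length P \<le> length Q"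
    by (auto simp: p_pivot_path_def)
  have "has_lshift_at n m P i" if "i \<le> m" for i
  proof -
    have "0 \<le> (\<Sum>t=i+1..m+1. v t)" using sums that by simp
    moreover have "0 < int n * int (count_steps (wrapping_lshift n m) P)" using \<open>1 < n\<close> wraps by simp
    ultimately have "0 < int (count_steps (lshift n m i) P)"
      using left_path_lshift_count[OF P that left] by linarith
    then show ?thesis by (simp add: has_lshift_at_iff_count_steps)
  qed
  then have "p = int m + 1"
    using wall \<open>-1 \<le> p\<close> \<open>p \<le> int m + 1\<close> by (auto simp: is_wall_def inner_wall_def)
  obtain Q where Q: "zpath_to0 n m v Q" and left_Q: "successively (\<lambda>x y. \<exists>i. lshift n m i x y) Q"
    and length_P: "int (length P) = int (length Q) + int n * (int m + 1)"
    using left_path_shortening[OF P left wraps sums] by blast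
  have "\<not> has_rshift_at n m Q m"
    using left_Q Q lshift_not_rshift_last \<open>1 < n\<close> \<open>1 \<le> m\<close>
    by (fastforce simp: has_rshift_at_def successively_iff_nth zpath_to0_def zpath_def)
  then have "length P \<le> length Q" using shortest[OF Q] \<open>p = int m + 1\<close> by (simp add: is_wall_def)
  moreover have "0 < int n * (int m + 1)" using \<open>1 < n\<close> by simp
  ultimately show False using length_P by linarith
qed

lemma last_interval_no_wrapping:
  assumes "1 < n" "1 \<le> m" and pivot: "pivot_path n m v P"
    and interval: "P_interval n m P p1 (int m + 1)"
    and left: "shifts_left_in n m P (p1 + 1) (int m + 1)"
    and sums: "\<forall>j::nat. p1 + 1 \<le> int j \<and> int j \<le> int m + 1 \<longrightarrow> 0 \<le> (\<Sum>t=j..m+1. v t)"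
  shows "count_steps (wrapping_lshift n m) P = 0"
proof -
  have right: "\<forall>k i. k + 1 < length P \<longrightarrow> rshift n m i (P ! k) (P ! (k + 1)) \<longrightarrow> int i \<le> p1"
    using left by (force simp: shifts_left_in_def rshift_def)
  consider "p1 = -1" | "inner_wall n m P p1" using interval by (auto simp: P_interval_def)
  then show ?thesis
  proof cases
    case 1
    then show ?thesis
      using left_pivot_path_no_wrapping[OF assms(1-3)] right sums by fastforce
  next
    case 2
    then obtain q where "p1 = int q" "q \<le> m" by (auto simp: inner_wall_def intro: nonneg_eq_int)
    then show ?thesis
      using inner_wall_no_wrapping[OF pivot_path_zpath_to0[OF pivot]] 2 right sums by auto
  qed
qed

section \<open>Mirror symmetry\<close>

definition reflect :: "nat \<Rightarrow> (nat \<Rightarrow> int) \<Rightarrow> (nat \<Rightarrow> int)" where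
  "reflect m u = (\<lambda>i. if i \<le> m + 1 then u (m + 1 - i) else 0)"

lemma sum_reflect: "j \<le> m + 1 \<Longrightarrow> (\<Sum>i=j..m+1. reflect m u i) = (\<Sum>i=0..m+1-j. u i)"
  by (rule sum.reindex_bij_witness[where i = "\<lambda>t. m + 1 - t" and j = "\<lambda>t. m + 1 - t"])
     (auto simp: reflect_def)

lemma reflect_reflect: "zvert n m u \<Longrightarrow> reflect m (reflect m u) = u"
  by (auto simp: reflect_def zvert_def fun_eq_iff)

lemma zvert_reflect:
  assumes u: "zvert n m u"
  shows "zvert n m (reflect m u)"
proof -
  have "(\<Sum>i\<le>m+1. reflect m u i) = (\<Sum>i\<le>m+1. u i)"
    using sum_reflect[of 0 m u] by (simp add: atMost_atLeast0)
  moreover have "reflect m u i \<in> {-1, 0, 1}" if "i \<in> {1..m}" for i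
  proof -
    have "m + 1 - i \<in> {1..m}" using that by auto
    then show ?thesis using u that by (simp add: zvert_def reflect_def)
  qed
  ultimately show ?thesis using u by (simp add: zvert_def reflect_def)
qed

lemma reflect_eq_outside:
  assumes "\<forall>t. t \<noteq> i \<and> t \<noteq> i + 1 \<longrightarrow> y t = x t" "i \<le> m"
  shows "\<forall>t. t \<noteq> m - i \<and> t \<noteq> m - i + 1 \<longrightarrow> reflect m y t = reflect m x t"
proof (intro allI impI)
  fix t assume "t \<noteq> m - i \<and> t \<noteq> m - i + 1"
  then have "t \<le> m + 1 \<Longrightarrow> m + 1 - t \<noteq> i \<and> m + 1 - t \<noteq> i + 1" using \<open>i \<le> m\<close> by auto
  then show "reflect m y t = reflect m x t" using assms(1) by (simp add: reflect_def)
qed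

lemma reflect_shift_coords:
  assumes "i \<le> m"
  shows "reflect m u (m - i) = u (i + 1)" "reflect m u (m - i + 1) = u i"
    "coord_norm n m (m - i) = coord_norm n m (i + 1)" "coord_norm n m (m - i + 1) = coord_norm n m i"
  using assms by (auto simp: reflect_def coord_norm_def fun_eq_iff Suc_diff_le)

lemma rshift_reflect:
  assumes "lshift n m i x y"
  shows "rshift n m (m - i) (reflect m x) (reflect m y)"
proof -
  have "i \<le> m" using assms by (simp add: lshift_def)
  then show ?thesis
    using assms reflect_eq_outside[of i y x m] reflect_shift_coords[OF \<open>i \<le> m\<close>]
    by (simp add: lshift_def rshift_def)
qed

lemma lshift_reflect:
  assumes "rshift n m i x y"
  shows "lshift n m (m - i) (reflect m x) (reflect m y)"
proof -
  have "i \<le> m" using assms by (simp add: rshift_def)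
  then show ?thesis
    using assms reflect_eq_outside[of i y x m] reflect_shift_coords[OF \<open>i \<le> m\<close>]
    by (simp add: lshift_def rshift_def)
qed

lemma reflect_shift_iff:
  assumes "zvert n m x" "zvert n m y" "i \<le> m"
  shows "lshift n m i (reflect m x) (reflect m y) \<longleftrightarrow> rshift n m (m - i) x y"
    and "rshift n m i (reflect m x) (reflect m y) \<longleftrightarrow> lshift n m (m - i) x y"
  using rshift_reflect[of n m i "reflect m x" "reflect m y"] lshift_reflect[of n m "m - i" x y]
    lshift_reflect[of n m i "reflect m x" "reflect m y"] rshift_reflect[of n m "m - i" x y]
    assms by (auto simp: reflect_reflect)

lemma zpath_to0_reflect:
  assumes "zpath_to0 n m v Q"
  shows "zpath_to0 n m (reflect m v) (map (reflect m) Q)"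
proof -
  have "zadj n m (reflect m x) (reflect m y)" if "zadj n m x y" for x y
    using that zvert_reflect rshift_reflect lshift_reflect unfolding zadj_def by blast
  moreover have "reflect m (\<lambda>_. 0) = (\<lambda>_. 0)" by (simp add: reflect_def)
  ultimately show ?thesis
    using assms zvert_reflect
    by (auto simp: zpath_to0_def zpath_iff_successively successively_map hd_map last_map
             elim: successively_mono)
qed

lemma has_shift_at_reflect:
  assumes "\<forall>x\<in>set Q. zvert n m x" "i \<le> m"
  shows "has_lshift_at n m (map (reflect m) Q) i \<longleftrightarrow> has_rshift_at n m Q (m - i)"
    and "has_rshift_at n m (map (reflect m) Q) i \<longleftrightarrow> has_lshift_at n m Q (m - i)"
  using reflect_shift_iff[OF _ _ \<open>i \<le> m\<close>] assms(1)
  by (auto simp: has_lshift_at_def has_rshift_at_def nth_mem)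

lemma inner_wall_reflect:
  assumes "\<forall>x\<in>set Q. zvert n m x"
  shows "inner_wall n m (map (reflect m) Q) q \<longleftrightarrow> inner_wall n m Q (int m - q)"
proof (cases "0 \<le> q \<and> q \<le> int m")
  case True
  then have "nat q \<le> m" "m - nat q = nat (int m - q)" by auto
  then show ?thesis using True has_shift_at_reflect[OF assms \<open>nat q \<le> m\<close>] by (auto simp: inner_wall_def)
qed (auto simp: inner_wall_def)

lemma is_wall_reflect:
  assumes "\<forall>x\<in>set Q. zvert n m x"
  shows "is_wall n m (map (reflect m) Q) q \<longleftrightarrow> is_wall n m Q (int m - q)"
proof -
  have "has_lshift_at n m (map (reflect m) Q) 0 \<longleftrightarrow> has_rshift_at n m Q m"
    "has_rshift_at n m (map (reflect m) Q) m \<longleftrightarrow> has_lshift_at n m Q 0"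
    using has_shift_at_reflect[OF assms, of 0] has_shift_at_reflect[OF assms, of m] by simp_all
  moreover have "q = -1 \<longleftrightarrow> int m - q = int m + 1" "q = int m + 1 \<longleftrightarrow> int m - q = -1" by auto
  ultimately show ?thesis unfolding is_wall_def inner_wall_reflect[OF assms] by blast
qed

lemma pivot_path_reflect:
  assumes "pivot_path n m v P"
  shows "pivot_path n m (reflect m v) (map (reflect m) P)"
proof -
  obtain p where p: "-1 \<le> p" "p \<le> int m + 1" "p_pivot_path n m p v P"
    using assms by (auto simp: pivot_path_def)
  then have P: "zpath_to0 n m v P" and wall: "is_wall n m P p"
    and shortest: "\<And>Q. zpath_to0 n m v Q \<Longrightarrow> is_wall n m Q p \<Longrightarrow> length P \<le> length Q"
    by (auto simp: p_pivot_path_def)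
  have vertices: "\<forall>x\<in>set P. zvert n m x" using P by (simp add: zpath_to0_def zpath_def)
  have "p_pivot_path n m (int m - p) (reflect m v) (map (reflect m) P)"
    unfolding p_pivot_path_def
  proof (intro conjI allI impI)
    show "zpath_to0 n m (reflect m v) (map (reflect m) P)" using zpath_to0_reflect[OF P] .
    show "is_wall n m (map (reflect m) P) (int m - p)" using is_wall_reflect[OF vertices] wall by simp
    fix Q assume Q: "zpath_to0 n m (reflect m v) Q \<and> is_wall n m Q (int m - p)"
    then have "\<forall>x\<in>set Q. zvert n m x" by (simp add: zpath_to0_def zpath_def)
    then have "is_wall n m (map (reflect m) Q) p" using is_wall_reflect Q by simp
    moreover have "zpath_to0 n m v (map (reflect m) Q)"
      using zpath_to0_reflect[of n m "reflect m v" Q] Q reflect_reflect[OF zpath_to0_zvert[OF P]] by simp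
    ultimately show "length (map (reflect m) P) \<le> length Q" using shortest by fastforce
  qed
  moreover have "-1 \<le> int m - p" "int m - p \<le> int m + 1" using p(1,2) by auto
  ultimately show ?thesis unfolding pivot_path_def by blast
qed

lemma first_interval_no_wrapping:
  assumes "1 < n" "1 \<le> m" and pivot: "pivot_path n m v P"
    and interval: "P_interval n m P (-1) p2"
    and right: "shifts_right_in n m P 0 p2"
    and sums: "\<forall>j::nat. int j \<le> p2 \<longrightarrow> 0 \<le> (\<Sum>t=0..j. v t)"
  shows "\<not> (\<exists>k. k + 1 < length P \<and> rshift n m 0 (P ! k) (P ! (k + 1)) \<and> (P ! k) 0 = 0)"
proof
  assume "\<exists>k. k + 1 < length P \<and> rshift n m 0 (P ! k) (P ! (k + 1)) \<and> (P ! k) 0 = 0"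
  then obtain k where k: "k + 1 < length P" "rshift n m 0 (P ! k) (P ! (k + 1))" "(P ! k) 0 = 0"
    by blast
  let ?P' = "map (reflect m) P"
  have vertices: "\<forall>x\<in>set P. zvert n m x"
    using pivot_path_zpath_to0[OF pivot] by (simp add: zpath_to0_def zpath_def)
  have "P_interval n m ?P' (int m - p2) (int m + 1)"
    using interval inner_wall_reflect[OF vertices] by (auto simp: P_interval_def)
  moreover have "shifts_left_in n m ?P' (int m - p2 + 1) (int m + 1)"
    using right reflect_shift_iff(2) vertices
    by (fastforce simp: shifts_left_in_def shifts_right_in_def nth_mem)
  moreover have "\<forall>j::nat. int m - p2 + 1 \<le> int j \<and> int j \<le> int m + 1 \<longrightarrow>
                   0 \<le> (\<Sum>t=j..m+1. reflect m v t)"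
    using sums sum_reflect by fastforce
  ultimately have "count_steps (wrapping_lshift n m) ?P' = 0"
    using last_interval_no_wrapping[OF assms(1,2) pivot_path_reflect[OF pivot]] by blast
  moreover have "wrapping_lshift n m (?P' ! k) (?P' ! (k + 1))"
    using lshift_reflect[OF k(2)] k by (simp add: wrapping_lshift_def reflect_def)
  ultimately show False using k(1) by (auto simp: count_steps_eq_0_iff successively_iff_nth)
qed

theorem lemma5p14:
  fixes n m :: nat and v :: "nat \<Rightarrow> int" and P :: "(nat \<Rightarrow> int) list" and p1 p2 :: int
  assumes "n > 1" and "m \<ge> 1"
    and "pivot_path n m v P"
    and "P_interval n m P p1 p2"
  shows "(p2 = int m + 1 \<and> shifts_left_in n m P (p1 + 1) p2 \<and>
           (\<forall>j::nat. p1 + 1 \<le> int j \<and> int j \<le> p2 \<longrightarrow> (\<Sum>i=j..m+1. v i) \<ge> 0)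
         \<longrightarrow> \<not> (\<exists>k. k + 1 < length P \<and> lshift n m m (P!k) (P!(k+1)) \<and> (P!k) (m+1) = 0))
       \<and> (p1 = -1 \<and> shifts_right_in n m P (p1 + 1) p2 \<and>
           (\<forall>j::nat. p1 + 1 \<le> int j \<and> int j \<le> p2 \<longrightarrow> (\<Sum>i=0..j. v i) \<ge> 0)
         \<longrightarrow> \<not> (\<exists>k. k + 1 < length P \<and> rshift n m 0 (P!k) (P!(k+1)) \<and> (P!k) 0 = 0))"
proof (intro conjI impI)
  assume "p2 = int m + 1 \<and> shifts_left_in n m P (p1 + 1) p2 \<and>
    (\<forall>j::nat. p1 + 1 \<le> int j \<and> int j \<le> p2 \<longrightarrow> (\<Sum>i=j..m+1. v i) \<ge> 0)"
  then have "count_steps (wrapping_lshift n m) P = 0"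
    using last_interval_no_wrapping[OF assms(1-3)] assms(4) by auto
  then show "\<not> (\<exists>k. k + 1 < length P \<and> lshift n m m (P!k) (P!(k+1)) \<and> (P!k) (m+1) = 0)"
    by (auto simp: count_steps_eq_0_iff successively_iff_nth wrapping_lshift_def)
next
  assume "p1 = -1 \<and> shifts_right_in n m P (p1 + 1) p2 \<and>
    (\<forall>j::nat. p1 + 1 \<le> int j \<and> int j \<le> p2 \<longrightarrow> (\<Sum>i=0..j. v i) \<ge> 0)"
  then show "\<not> (\<exists>k. k + 1 < length P \<and> rshift n m 0 (P!k) (P!(k+1)) \<and> (P!k) 0 = 0)"
    using first_interval_no_wrapping[OF assms(1-3)] assms(4) by auto
qed

end
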